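(* For every integer $m\ge3$, $6$ divides $P_m(3)$.
   Context: The Ducci function $D:\mathbb{Z}_m^3\to\mathbb{Z}_m^3$ is $D(x_1,x_2,x_3)=(x_1+x_2,\,x_2+x_3,\,x_3+x_1)$, entries mod $m$. The period $\mathrm{Per}(\mathbf{u})$ is the smallest $k\ge1$ such that $D^{l+k}(\mathbf{u})=D^l(\mathbf{u})$ for some $l\ge0$, and $P_m(3)=\mathrm{Per}(0,0,1)$. *)

theory Defs
  imports Main
begin

text \<open>Elements of Z_m are represented by naturals reduced mod m; a triple in Z_m^3
  is a nat triple.\<close>

definition ducci :: "nat \<Rightarrow> nat \<times> nat \<times> nat \<Rightarrow> nat \<times> nat \<times> nat" where
  "ducci m u = (case u of (x1, x2, x3) \<Rightarrow>
     ((x1 + x2) mod m, (x2 + x3) mod m, (x3 + x1) mod m))"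

definition ducci_period :: "nat \<Rightarrow> nat \<times> nat \<times> nat \<Rightarrow> nat" where
  "ducci_period m u =
     (LEAST k. k \<ge> 1 \<and> (\<exists>l. (ducci m ^^ (l + k)) u = (ducci m ^^ l) u))"

definition P3 :: "nat \<Rightarrow> nat" where
  "P3 m = ducci_period m (0, 0, 1)"

end

theory Submission
  imports Defs
begin

(* The differences (a - b, b - c, c - a) of a triple evolve under D by the linear map
   (x, y, z) \<mapsto> (-z, -x, -y), whose sixth power is the identity. For (0, 0, 1) the difference
   vector is (0, -1, 1); its six images have entries in {-1, 0, 1}, which remain distinct
   modulo m \<ge> 3, so they are pairwise different mod m. Hence any return time of the orbit of
   (0, 0, 1), in particular its period, is a multiple of 6. *)

definition ducci_diffs :: "nat \<times> nat \<times> nat \<Rightarrow> int \<times> int \<times> int" where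
  "ducci_diffs = (\<lambda>(a, b, c). (int a - int b, int b - int c, int c - int a))"

definition neg_rotate :: "int \<times> int \<times> int \<Rightarrow> int \<times> int \<times> int" where
  "neg_rotate = (\<lambda>(x, y, z). (-z, -x, -y))"

definition mod_triple :: "int \<Rightarrow> int \<times> int \<times> int \<Rightarrow> int \<times> int \<times> int" where
  "mod_triple M = (\<lambda>(x, y, z). (x mod M, y mod M, z mod M))"

definition signs :: "int set" where
  "signs = {-1, 0, 1}"

lemma mod_triple_neg_rotate_cong:
  assumes "mod_triple M s = mod_triple M t"
  shows "mod_triple M (neg_rotate s) = mod_triple M (neg_rotate t)"
  using assms by (auto simp: mod_triple_def neg_rotate_def split: prod.splits
      intro: mod_minus_cong)

lemma ducci_diffs_ducci:
  "mod_triple (int m) (ducci_diffs (ducci m u)) = mod_triple (int m) (neg_rotate (ducci_diffs u))"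
proof -
  have diff_mod: "(int (p mod m) - int (q mod m)) mod int m = (int p - int q) mod int m"
    for p q :: nat
    by (simp add: zmod_int mod_diff_eq)
  show ?thesis
    by (cases u) (simp add: ducci_def ducci_diffs_def neg_rotate_def mod_triple_def diff_mod)
qed

lemma ducci_diffs_funpow:
  "mod_triple (int m) (ducci_diffs ((ducci m ^^ n) u))
     = mod_triple (int m) ((neg_rotate ^^ n) (ducci_diffs u))"
proof (induction n)
  case (Suc n)
  have "mod_triple (int m) (ducci_diffs ((ducci m ^^ Suc n) u))
      = mod_triple (int m) (neg_rotate (ducci_diffs ((ducci m ^^ n) u)))"
    by (simp add: ducci_diffs_ducci)
  also have "\<dots> = mod_triple (int m) (neg_rotate ((neg_rotate ^^ n) (ducci_diffs u)))"
    using Suc.IH by (rule mod_triple_neg_rotate_cong)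
  finally show ?case
    by simp
qed simp

lemma neg_rotate_funpow_6: "(neg_rotate ^^ 6) t = t"
  by (cases t) (simp add: neg_rotate_def numeral_eq_Suc)

lemma neg_rotate_cube:
  assumes "uminus ` A \<subseteq> A" and "t \<in> A \<times> A \<times> A"
  shows "neg_rotate t \<in> A \<times> A \<times> A"
  using assms by (cases t) (auto simp: neg_rotate_def)

lemma neg_rotate_funpow_cube:
  assumes "uminus ` A \<subseteq> A" and "t \<in> A \<times> A \<times> A"
  shows "(neg_rotate ^^ n) t \<in> A \<times> A \<times> A"
  by (induction n) (simp_all add: assms neg_rotate_cube)

lemma inj_on_mod_signs:
  fixes M :: int
  assumes "3 \<le> M"
  shows "inj_on (\<lambda>x. x mod M) signs"
proof (rule inj_onI, rule ccontr)
  fix x y :: int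
  assume xy: "x \<in> signs" "y \<in> signs" "x mod M = y mod M" "x \<noteq> y"
  from \<open>x mod M = y mod M\<close> have "M dvd x - y"
    by (simp add: mod_eq_dvd_iff)
  then have "\<bar>M\<bar> \<le> \<bar>x - y\<bar>"
    by (rule dvd_imp_le_int[rotated]) (use \<open>x \<noteq> y\<close> in simp)
  moreover have "\<bar>x - y\<bar> \<le> 2"
    using xy(1,2) by (auto simp: signs_def)
  ultimately show False
    using assms by simp
qed

lemma inj_on_mod_triple_cube:
  assumes "inj_on (\<lambda>x. x mod M) A"
  shows "inj_on (mod_triple M) (A \<times> A \<times> A)"
  unfolding inj_on_def mod_triple_def
  by (clarsimp simp: inj_onD[OF assms])

lemma neg_rotate_orbit_mod_distinct:
  assumes "3 \<le> M"
  shows "inj_on (\<lambda>i. mod_triple M ((neg_rotate ^^ i) (0, -1, 1))) {..<6}"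
proof -
  let ?orbit = "\<lambda>i. (neg_rotate ^^ i) (0, -1, 1)"
  have orbit_distinct: "inj_on ?orbit {..<6}"
    by (simp add: inj_on_def numeral_eq_Suc lessThan_Suc neg_rotate_def)
  have "uminus ` signs \<subseteq> signs" and "(0, -1, 1) \<in> signs \<times> signs \<times> signs"
    by (auto simp: signs_def)
  then have "?orbit ` {..<6} \<subseteq> signs \<times> signs \<times> signs"
    using neg_rotate_funpow_cube by blast
  then have "inj_on (mod_triple M) (?orbit ` {..<6})"
    using inj_on_mod_triple_cube[OF inj_on_mod_signs[OF assms]] by (rule inj_on_subset[rotated])
  with orbit_distinct show ?thesis
    using comp_inj_on by (auto simp: comp_def)
qed

lemma six_dvd_ducci_return_time:
  assumes "3 \<le> m" and "(ducci m ^^ (l + k)) (0, 0, 1) = (ducci m ^^ l) (0, 0, 1)"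
  shows "6 dvd k"
proof -
  let ?orbit = "\<lambda>i. mod_triple (int m) ((neg_rotate ^^ i) (0, -1, 1))"
  have "?orbit (l + k) = ?orbit l"
    using assms(2) ducci_diffs_funpow[of m "l + k" "(0, 0, 1)"] ducci_diffs_funpow[of m l "(0, 0, 1)"]
    by (simp add: ducci_diffs_def)
  then have return: "?orbit ((l + k) mod 6) = ?orbit (l mod 6)"
    by (simp add: funpow_mod_eq neg_rotate_funpow_6)
  have distinct: "inj_on ?orbit {..<6}"
    using assms(1) by (simp add: neg_rotate_orbit_mod_distinct)
  have "(l + k) mod 6 = l mod 6"
    using inj_onD[OF distinct return] by simp
  then show ?thesis
    by presburger
qed

lemma funpow_eventually_periodic:
  fixes f :: "'a \<Rightarrow> 'a"
  assumes "finite (range f)"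
  shows "\<exists>k \<ge> 1. \<exists>l. (f ^^ (l + k)) x = (f ^^ l) x"
proof -
  have "(f ^^ n) x \<in> insert x (range f)" for n
    by (cases n) auto
  then have "range (\<lambda>n. (f ^^ n) x) \<subseteq> insert x (range f)"
    by blast
  then have "\<not> inj (\<lambda>n. (f ^^ n) x)"
    using assms finite_imageD finite_subset by blast
  then obtain i j where "i < j" "(f ^^ i) x = (f ^^ j) x"
    by (metis linorder_inj_onI')
  then show ?thesis
    by (intro exI[of _ "j - i"]) (auto intro!: exI[of _ i])
qed

lemma finite_range_ducci: "0 < m \<Longrightarrow> finite (range (ducci m))"
  by (rule finite_subset[of _ "{..<m} \<times> {..<m} \<times> {..<m}"]) (auto simp: ducci_def)

lemma ducci_period_returns:
  assumes "0 < m"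
  shows "\<exists>l. (ducci m ^^ (l + ducci_period m u)) u = (ducci m ^^ l) u"
  using LeastI_ex[OF funpow_eventually_periodic[OF finite_range_ducci[OF assms]]]
  unfolding ducci_period_def by blast

theorem theorem3p5:
  fixes m :: nat
  assumes "m \<ge> 3"
  shows "6 dvd P3 m"
proof -
  obtain l where "(ducci m ^^ (l + P3 m)) (0, 0, 1) = (ducci m ^^ l) (0, 0, 1)"
    using ducci_period_returns[of m "(0, 0, 1)"] assms unfolding P3_def by auto
  then show ?thesis
    using six_dvd_ducci_return_time assms by blast
qed

end
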